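(* Let $\mathcal{A}\in\mathbb{R}^{n_1\times n_2\times n_3}$, let $q\in\mathbb{N}$, and let $\mathcal{B}\in\mathbb{R}^{n_2\times s\times n_3}$. Let $\mathcal{Q}\in\mathbb{R}^{n_1\times m\times n_3}$, with $\mathcal{Q}^\top*\mathcal{Q}=\mathcal{I}$, be an orthonormal basis (the T-QR orthonormal factor) of $$\mathcal{K}=[\mathcal{A}*\mathcal{B},\ (\mathcal{A}*\mathcal{A}^\top)*\mathcal{A}*\mathcal{B},\ldots,(\mathcal{A}*\mathcal{A}^\top)^q*\mathcal{A}*\mathcal{B}].$$ Let $\mathcal{C}=\mathcal{Q}^\top*\mathcal{A}$, let $\mathcal{C}=\mathcal{U}_C*\mathcal{S}_C*\mathcal{V}_C^\top$ be its T-SVD, and let $\widehat{\mathcal{U}}=\mathcal{Q}*\mathcal{U}_C$. For $k\le m$ let $\widehat{\mathcal{U}}_k=\widehat{\mathcal{U}}(:,1:k,:)$ be its first $k$ lateral slices. Then $$\|\mathcal{A}-\widehat{\mathcal{U}}_k*\widehat{\mathcal{U}}_k^\top*\mathcal{A}\|_F^2\le \|\mathcal{A}_k-\mathcal{Q}*\mathcal{Q}^\top*\mathcal{A}_k\|_F^2+\|\mathcal{A}_{k,\perp}\|_F^2.$$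
   Context: For a real tensor $\mathcal{X}\in\mathbb{R}^{n_1\times n_2\times n_3}$ with frontal slices $X^{(k)}$: - $\mathtt{bcirc}(\mathcal{X})$ is the $n_1n_3\times n_2n_3$ block circulant matrix with first block column $X^{(1)},\dots,X^{(n_3)}$. $\mathtt{unfold}$ stacks the frontal slices vertically and $\mathtt{fold}$ inverts it. - The T-product is $\mathcal{X}*\mathcal{Y}=\mathtt{fold}(\mathtt{bcirc}(\mathcal{X})\mathtt{unfold}(\mathcal{Y}))$. - The transpose $\mathcal{X}^\top$ has slices $(X^{(1)})^\top$ and $\mathcal{X}^\top(:,:,k)=(X^{(n_3+2-k)})^\top$ for $k\ge 2$. - $\mathcal{I}$ is the identity tensor (first frontal slice an identity matrix, others zero). Orthogonal tensors $\mathcal{U}$ satisfy $\mathcal{U}^\top*\mathcal{U}=\mathcal{U}*\mathcal{U}^\top=\mathcal{I}$. Powers are repeated T-products. - $[\cdot,\ldots,\cdot]$ is concatenation along the second mode. - $\|\mathcal{X}\|_F$ is the square root of the sum of squared entries. - The T-SVD $\mathcal{X}=\mathcal{U}*\mathcal{S}*\mathcal{V}^\top$ (with $\mathcal{U},\mathcal{V}$ orthogonal and $\mathcal{S}$ f-diagonal, i.e. every frontal slice diagonal) is computed by applying the DFT along the third mode, taking an SVD of each frontal slice with singular values in nonincreasing order, and transforming back. - For $\mathcal{A}=\mathcal{U}*\mathcal{S}*\mathcal{V}^\top$ the tubal-rank-$k$ truncation is $\mathcal{A}_k=\mathcal{U}(:,1:k,:)*\mathcal{S}(1:k,1:k,:)*\mathcal{V}(:,1:k,:)^\top$,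 and $\mathcal{A}_{k,\perp}=\mathcal{A}-\mathcal{A}_k=\mathcal{U}(:,k+1:n_1,:)*\mathcal{S}(k+1:n_1,k+1:n_2,:)*\mathcal{V}(:,k+1:n_2,:)^\top$. *)

theory Defs
  imports Complex_Main
begin

text \<open>Third-order real tensors are represented as functions
  nat => nat => nat => real, indexed from 0, together with explicit
  dimensions n1 x n2 x n3.  Operations return 0 outside the index range.\<close>

type_synonym tensor = "nat \<Rightarrow> nat \<Rightarrow> nat \<Rightarrow> real"

definition is_tensor :: "nat \<Rightarrow> nat \<Rightarrow> nat \<Rightarrow> tensor \<Rightarrow> bool" where
  "is_tensor n1 n2 n3 X \<longleftrightarrow>
     (\<forall>i j k. \<not> (i < n1 \<and> j < n2 \<and> k < n3) \<longrightarrow> X i j k = 0)"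

text \<open>T-product of X (n1 x n2 x n3) and Y (n2 x l x n3):
  fold (bcirc X * unfold Y); frontal slice k is sum over t of X^((k-t) mod n3) Y^(t).\<close>
definition tprod :: "nat \<Rightarrow> nat \<Rightarrow> nat \<Rightarrow> nat \<Rightarrow> tensor \<Rightarrow> tensor \<Rightarrow> tensor" where
  "tprod n1 n2 n3 l X Y = (\<lambda>i j k.
     if i < n1 \<and> j < l \<and> k < n3
     then (\<Sum>p<n2. \<Sum>t<n3. X i p ((k + n3 - t) mod n3) * Y p j t)
     else 0)"

definition ttrans :: "nat \<Rightarrow> nat \<Rightarrow> nat \<Rightarrow> tensor \<Rightarrow> tensor" where
  "ttrans n1 n2 n3 X = (\<lambda>i j k.
     if i < n2 \<and> j < n1 \<and> k < n3 then X j i ((n3 - k) mod n3) else 0)"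

definition tid :: "nat \<Rightarrow> nat \<Rightarrow> tensor" where
  "tid n n3 = (\<lambda>i j k. if i < n \<and> j < n \<and> k = 0 \<and> 0 < n3 \<and> i = j then 1 else 0)"

definition tminus :: "tensor \<Rightarrow> tensor \<Rightarrow> tensor" where
  "tminus X Y = (\<lambda>i j k. X i j k - Y i j k)"

primrec tpow :: "nat \<Rightarrow> nat \<Rightarrow> tensor \<Rightarrow> nat \<Rightarrow> tensor" where
  "tpow n n3 X 0 = tid n n3"
| "tpow n n3 X (Suc b) = tprod n n n3 n X (tpow n n3 X b)"

definition orthogonal_tensor :: "nat \<Rightarrow> nat \<Rightarrow> tensor \<Rightarrow> bool" where
  "orthogonal_tensor n n3 U \<longleftrightarrow>
     tprod n n n3 n (ttrans n n n3 U) U = tid n n3 \<and>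
     tprod n n n3 n U (ttrans n n n3 U) = tid n n3"

definition f_diagonal :: "tensor \<Rightarrow> bool" where
  "f_diagonal S \<longleftrightarrow> (\<forall>i j k. i \<noteq> j \<longrightarrow> S i j k = 0)"

definition f_upper_triangular :: "tensor \<Rightarrow> bool" where
  "f_upper_triangular R \<longleftrightarrow> (\<forall>i j k. j < i \<longrightarrow> R i j k = 0)"

definition tfro :: "nat \<Rightarrow> nat \<Rightarrow> nat \<Rightarrow> tensor \<Rightarrow> real" where
  "tfro n1 n2 n3 X = sqrt (\<Sum>i<n1. \<Sum>j<n2. \<Sum>k<n3. (X i j k)\<^sup>2)"

definition tdft :: "nat \<Rightarrow> tensor \<Rightarrow> nat \<Rightarrow> nat \<Rightarrow> nat \<Rightarrow> complex" where
  "tdft n3 X i j f = (\<Sum>t<n3. complex_of_real (X i j t) * cis (- 2 * pi * real f * real t / real n3))"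

text \<open>T-SVD X = U * S * V^T of X (n1 x n2 x n3): U, V orthogonal, S f-diagonal, and
  in the Fourier domain each frontal slice of S carries the singular values of the
  corresponding slice, i.e. its diagonal is real, nonnegative and nonincreasing.\<close>
definition is_tsvd :: "nat \<Rightarrow> nat \<Rightarrow> nat \<Rightarrow> tensor \<Rightarrow> tensor \<Rightarrow> tensor \<Rightarrow> tensor \<Rightarrow> bool" where
  "is_tsvd n1 n2 n3 X U S V \<longleftrightarrow>
     is_tensor n1 n1 n3 U \<and> is_tensor n1 n2 n3 S \<and> is_tensor n2 n2 n3 V \<and>
     orthogonal_tensor n1 n3 U \<and> orthogonal_tensor n2 n3 V \<and> f_diagonal S \<and>
     X = tprod n1 n2 n3 n2 (tprod n1 n1 n3 n2 U S) (ttrans n2 n2 n3 V) \<and>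
     (\<forall>f<n3. \<forall>i<min n1 n2.
        Im (tdft n3 S i i f) = 0 \<and> 0 \<le> Re (tdft n3 S i i f) \<and>
        (Suc i < min n1 n2 \<longrightarrow> Re (tdft n3 S (Suc i) (Suc i) f) \<le> Re (tdft n3 S i i f)))"

definition tlat_take :: "nat \<Rightarrow> tensor \<Rightarrow> tensor" where
  "tlat_take k X = (\<lambda>i j t. if j < k then X i j t else 0)"

definition tlead :: "nat \<Rightarrow> tensor \<Rightarrow> tensor" where
  "tlead k X = (\<lambda>i j t. if i < k \<and> j < k then X i j t else 0)"

definition ttrunc :: "nat \<Rightarrow> nat \<Rightarrow> nat \<Rightarrow> nat \<Rightarrow> tensor \<Rightarrow> tensor \<Rightarrow> tensor \<Rightarrow> tensor" where
  "ttrunc n1 n2 n3 k U S V =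
     tprod n1 k n3 n2 (tprod n1 k n3 k (tlat_take k U) (tlead k S))
       (ttrans n2 k n3 (tlat_take k V))"

definition tcat :: "nat \<Rightarrow> nat \<Rightarrow> nat \<Rightarrow> nat \<Rightarrow> (nat \<Rightarrow> tensor) \<Rightarrow> tensor" where
  "tcat n1 s n3 nb F = (\<lambda>i j k.
     if i < n1 \<and> j < nb * s \<and> k < n3 then F (j div s) i (j mod s) k else 0)"

definition krylov :: "nat \<Rightarrow> nat \<Rightarrow> nat \<Rightarrow> nat \<Rightarrow> nat \<Rightarrow> tensor \<Rightarrow> tensor \<Rightarrow> tensor" where
  "krylov n1 n2 n3 s q A B =
     tcat n1 s n3 (Suc q) (\<lambda>b.
        tprod n1 n1 n3 s (tpow n1 n3 (tprod n1 n2 n3 n1 A (ttrans n1 n2 n3 A)) b)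
                         (tprod n1 n2 n3 s A B))"

definition is_tqr_factor :: "nat \<Rightarrow> nat \<Rightarrow> nat \<Rightarrow> nat \<Rightarrow> tensor \<Rightarrow> tensor \<Rightarrow> bool" where
  "is_tqr_factor n1 l n3 m K Q \<longleftrightarrow>
     is_tensor n1 m n3 Q \<and>
     tprod m n1 n3 m (ttrans n1 m n3 Q) Q = tid m n3 \<and>
     (\<exists>R. is_tensor m l n3 R \<and> f_upper_triangular R \<and> K = tprod n1 m n3 l Q R)"

end

theory Submission
  imports Defs
begin

text \<open>The DFT along the third mode turns T-products into products of the frontal slices,
  transposes into conjugate transposes, and by Parseval the squared Frobenius norm into the
  mean of the squared Frobenius norms of the slices.  So it suffices to prove the inequality
  for every Fourier slice, i.e. for complex matrices.

  There, let \<open>C = Q\<^sup>H A = U\<^sub>C S\<^sub>C V\<^sub>C\<^sup>H\<close>.  The truncation is \<open>A\<^sub>k = A P\<close> for the orthogonal projector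
  \<open>P = V D V\<^sup>H\<close> with \<open>D = diag(1,\<dots>,1,0,\<dots>,0)\<close>, of rank at most \<open>k\<close>.  Since the first \<open>k\<close>
  columns \<open>W\<close> of \<open>Q U\<^sub>C\<close> satisfy \<open>W\<^sup>H A = (S\<^sub>C V\<^sub>C\<^sup>H)(1:k,:)\<close>, Pythagoras gives
  \<open>\<parallel>A - W W\<^sup>H A\<parallel>\<^sup>2 = \<parallel>A\<parallel>\<^sup>2 - \<Sum>\<^sub>i\<^sub><\<^sub>k \<sigma>\<^sub>i(C)\<^sup>2\<close> on the left and
  \<open>\<parallel>A\<parallel>\<^sup>2 - \<parallel>C P\<parallel>\<^sup>2\<close> on the right, so it remains to show \<open>\<parallel>C P\<parallel>\<^sup>2 \<le> \<Sum>\<^sub>i\<^sub><\<^sub>k \<sigma>\<^sub>i(C)\<^sup>2\<close>.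
  Writing \<open>\<parallel>C P\<parallel>\<^sup>2 = \<Sum>\<^sub>i \<sigma>\<^sub>i\<^sup>2 w\<^sub>i\<close> with \<open>w\<^sub>i\<close> the squared norm of row \<open>i\<close> of \<open>V\<^sub>C\<^sup>H P\<close>, the
  weights lie in \<open>[0, 1]\<close> and sum to at most \<open>\<parallel>P\<parallel>\<^sup>2 \<le> k\<close>, which is Ky Fan's maximum principle.\<close>

section \<open>Complex matrices\<close>

text \<open>Complex matrices are encoded like the tensors: functions with explicit dimensions that
  vanish outside the index range.  \<open>cmat_mult r p c\<close> multiplies an \<open>r \<times> p\<close> by a \<open>p \<times> c\<close>
  matrix, and \<open>cmat_adj r c a\<close> is the \<open>r \<times> c\<close> conjugate transpose of a \<open>c \<times> r\<close> matrix.\<close>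

type_synonym cmat = "nat \<Rightarrow> nat \<Rightarrow> complex"

definition is_cmat :: "nat \<Rightarrow> nat \<Rightarrow> cmat \<Rightarrow> bool" where
  "is_cmat r c a \<longleftrightarrow> (\<forall>i j. \<not> (i < r \<and> j < c) \<longrightarrow> a i j = 0)"

definition cmat_mult :: "nat \<Rightarrow> nat \<Rightarrow> nat \<Rightarrow> cmat \<Rightarrow> cmat \<Rightarrow> cmat" where
  "cmat_mult r p c a b = (\<lambda>i j. if i < r \<and> j < c then (\<Sum>x<p. a i x * b x j) else 0)"

definition cmat_adj :: "nat \<Rightarrow> nat \<Rightarrow> cmat \<Rightarrow> cmat" where
  "cmat_adj r c a = (\<lambda>i j. if i < r \<and> j < c then cnj (a j i) else 0)"

definition cmat_one :: "nat \<Rightarrow> cmat" where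
  "cmat_one n = (\<lambda>i j. if i < n \<and> j < n \<and> i = j then 1 else 0)"

definition cmat_diff :: "cmat \<Rightarrow> cmat \<Rightarrow> cmat" where
  "cmat_diff a b = (\<lambda>i j. a i j - b i j)"

definition cmat_take :: "nat \<Rightarrow> cmat \<Rightarrow> cmat" where
  "cmat_take k a = (\<lambda>i j. if j < k then a i j else 0)"

definition cmat_lead :: "nat \<Rightarrow> cmat \<Rightarrow> cmat" where
  "cmat_lead k a = (\<lambda>i j. if i < k \<and> j < k then a i j else 0)"

definition cmat_inner :: "nat \<Rightarrow> nat \<Rightarrow> cmat \<Rightarrow> cmat \<Rightarrow> complex" where
  "cmat_inner r c a b = (\<Sum>i<r. \<Sum>j<c. cnj (a i j) * b i j)"

definition frob_sq :: "nat \<Rightarrow> nat \<Rightarrow> cmat \<Rightarrow> real" where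
  "frob_sq r c a = (\<Sum>i<r. \<Sum>j<c. (cmod (a i j))\<^sup>2)"

definition isometry_cmat :: "nat \<Rightarrow> nat \<Rightarrow> cmat \<Rightarrow> bool" where
  "isometry_cmat r c u \<longleftrightarrow> cmat_mult c r c (cmat_adj c r u) u = cmat_one c"

definition unitary_cmat :: "nat \<Rightarrow> cmat \<Rightarrow> bool" where
  "unitary_cmat n u \<longleftrightarrow> isometry_cmat n n u \<and> cmat_mult n n n u (cmat_adj n n u) = cmat_one n"

definition projector_cmat :: "nat \<Rightarrow> cmat \<Rightarrow> bool" where
  "projector_cmat n p \<longleftrightarrow> cmat_adj n n p = p \<and> cmat_mult n n n p p = p"

definition diag_cmat :: "cmat \<Rightarrow> bool" where
  "diag_cmat s \<longleftrightarrow> (\<forall>i j. i \<noteq> j \<longrightarrow> s i j = 0)"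

definition svd_cmat :: "nat \<Rightarrow> nat \<Rightarrow> cmat \<Rightarrow> cmat \<Rightarrow> cmat \<Rightarrow> cmat \<Rightarrow> bool" where
  "svd_cmat r c a u s v \<longleftrightarrow>
     is_cmat r r u \<and> is_cmat r c s \<and> is_cmat c c v \<and> unitary_cmat r u \<and> unitary_cmat c v \<and>
     diag_cmat s \<and> a = cmat_mult r c c (cmat_mult r r c u s) (cmat_adj c c v) \<and>
     (\<forall>i<min r c. Im (s i i) = 0 \<and> 0 \<le> Re (s i i) \<and>
        (Suc i < min r c \<longrightarrow> Re (s (Suc i) (Suc i)) \<le> Re (s i i)))"

lemma is_cmat_mult [simp]: "is_cmat r c (cmat_mult r p c a b)"
  by (simp add: is_cmat_def cmat_mult_def)

lemma is_cmat_adj [simp]: "is_cmat r c (cmat_adj r c a)"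
  by (simp add: is_cmat_def cmat_adj_def)

lemma is_cmat_one [simp]: "is_cmat n n (cmat_one n)"
  by (simp add: is_cmat_def cmat_one_def)

lemma is_cmat_eqI:
  "is_cmat r c a \<Longrightarrow> is_cmat r c b \<Longrightarrow> (\<And>i j. i < r \<Longrightarrow> j < c \<Longrightarrow> a i j = b i j) \<Longrightarrow> a = b"
  by (auto simp: is_cmat_def fun_eq_iff) (metis)

lemma cmat_mult_assoc:
  "cmat_mult r p c (cmat_mult r q p a b) d = cmat_mult r q c a (cmat_mult q p c b d)"
proof -
  have "(\<Sum>x<p. (\<Sum>y<q. a i y * b y x) * d x j) = (\<Sum>y<q. a i y * (\<Sum>x<p. b y x * d x j))" for i j
    by (simp add: sum_distrib_left sum_distrib_right mult.assoc sum.swap[of _ "{..<p}"])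
  then show ?thesis
    by (auto simp: cmat_mult_def fun_eq_iff intro!: sum.cong)
qed

lemma cmat_adj_mult:
  "cmat_adj c r (cmat_mult r p c a b) = cmat_mult c p r (cmat_adj c p b) (cmat_adj p r a)"
  by (auto simp: cmat_adj_def cmat_mult_def fun_eq_iff mult.commute intro!: sum.cong)

lemma cmat_adj_adj: "is_cmat r c a \<Longrightarrow> cmat_adj r c (cmat_adj c r a) = a"
  by (auto simp: cmat_adj_def is_cmat_def fun_eq_iff)

lemma cmat_mult_diag_left:
  assumes "diag_cmat s" "is_cmat m p s" "i < r" "j < c"
  shows "cmat_mult r p c s y i j = s i i * y i j"
proof -
  have "(\<Sum>x<p. s i x * y x j) = (\<Sum>x<p. if x = i then s i i * y i j else 0)"
    by (rule sum.cong) (use assms(1) in \<open>auto simp: diag_cmat_def\<close>)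
  then show ?thesis
    using assms(2-4) by (auto simp: cmat_mult_def is_cmat_def)
qed

lemma cmat_mult_diag_right:
  assumes "diag_cmat s" "is_cmat p m s" "i < r" "j < c"
  shows "cmat_mult r p c y s i j = y i j * s j j"
proof -
  have "(\<Sum>x<p. y i x * s x j) = (\<Sum>x<p. if x = j then y i j * s j j else 0)"
    by (rule sum.cong) (use assms(1) in \<open>auto simp: diag_cmat_def\<close>)
  then show ?thesis
    using assms(2-4) by (auto simp: cmat_mult_def is_cmat_def)
qed

lemma diag_cmat_one: "diag_cmat (cmat_one n)"
  by (simp add: diag_cmat_def cmat_one_def)

lemma diag_cmat_lead: "diag_cmat s \<Longrightarrow> diag_cmat (cmat_lead k s)"
  by (simp add: diag_cmat_def cmat_lead_def)

lemma cmat_mult_one_left: "is_cmat r c b \<Longrightarrow> cmat_mult r r c (cmat_one r) b = b"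
proof (rule is_cmat_eqI[of r c])
  show "cmat_mult r r c (cmat_one r) b i j = b i j" if "i < r" "j < c" for i j
    using cmat_mult_diag_left[OF diag_cmat_one is_cmat_one that] that by (simp add: cmat_one_def)
qed simp

lemma cmat_mult_one_right: "is_cmat r c b \<Longrightarrow> cmat_mult r c c b (cmat_one c) = b"
proof (rule is_cmat_eqI[of r c])
  show "cmat_mult r c c b (cmat_one c) i j = b i j" if "i < r" "j < c" for i j
    using cmat_mult_diag_right[OF diag_cmat_one is_cmat_one that] that by (simp add: cmat_one_def)
qed simp

lemma cmat_mult_lead_one: "is_cmat r c a \<Longrightarrow> cmat_mult r c c a (cmat_lead k (cmat_one c)) = cmat_take k a"
proof (rule is_cmat_eqI[of r c])
  show "is_cmat r c a \<Longrightarrow> is_cmat r c (cmat_take k a)"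
    by (simp add: is_cmat_def cmat_take_def)
  have "is_cmat c c (cmat_lead k (cmat_one c))"
    by (auto simp: cmat_lead_def cmat_one_def is_cmat_def)
  note diag = cmat_mult_diag_right[OF diag_cmat_lead[OF diag_cmat_one] this]
  show "cmat_mult r c c a (cmat_lead k (cmat_one c)) i j = cmat_take k a i j" if "i < r" "j < c" for i j
    using diag[OF that] that by (simp add: cmat_lead_def cmat_one_def cmat_take_def)
qed simp

lemma frob_sq_nonneg: "0 \<le> frob_sq r c a"
  by (simp add: frob_sq_def sum_nonneg)

lemma of_real_cmod_sq: "complex_of_real ((cmod z)\<^sup>2) = cnj z * z"
  by (subst complex_norm_square) (rule mult.commute)

lemma frob_sq_eq_inner: "frob_sq r c a = Re (cmat_inner r c a a)"
proof -
  have "(cmod z)\<^sup>2 = Re (cnj z * z)" for z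
    by (metis Re_complex_of_real of_real_cmod_sq)
  then show ?thesis
    by (simp add: frob_sq_def cmat_inner_def)
qed

lemma cmat_inner_commute: "cmat_inner r c b a = cnj (cmat_inner r c a b)"
  by (simp add: cmat_inner_def mult.commute)

lemma cmat_inner_mult_left:
  "cmat_inner r c (cmat_mult r p c u x) y = cmat_inner p c x (cmat_mult p r c (cmat_adj p r u) y)"
proof -
  have "(\<Sum>i<r. \<Sum>j<c. cnj (\<Sum>z<p. u i z * x z j) * y i j)
      = (\<Sum>i<r. \<Sum>j<c. \<Sum>z<p. cnj (x z j) * (cnj (u i z) * y i j))"
    by (simp add: sum_distrib_right sum_distrib_left mult_ac)
  also have "\<dots> = (\<Sum>z<p. \<Sum>j<c. \<Sum>i<r. cnj (x z j) * (cnj (u i z) * y i j))"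
    by (subst sum.swap) (simp add: sum.swap[of _ "{..<r}"])
  finally show ?thesis
    by (simp add: cmat_inner_def cmat_mult_def cmat_adj_def sum_distrib_left)
qed

lemma cmat_inner_mult_right:
  "cmat_inner r c (cmat_mult r p c x v) y = cmat_inner r p x (cmat_mult r c p y (cmat_adj c p v))"
proof -
  have "(\<Sum>j<c. cnj (\<Sum>z<p. x i z * v z j) * y i j) = (\<Sum>z<p. cnj (x i z) * (\<Sum>j<c. y i j * cnj (v z j)))" for i
    by (simp add: sum_distrib_left sum_distrib_right sum.swap[of _ "{..<c}"] mult_ac)
  then show ?thesis
    by (simp add: cmat_inner_def cmat_mult_def cmat_adj_def)
qed

lemma frob_sq_diff:
  "frob_sq r c (cmat_diff a b) = frob_sq r c a - 2 * Re (cmat_inner r c a b) + frob_sq r c b"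
proof -
  have "cmat_inner r c (cmat_diff a b) (cmat_diff a b)
      = cmat_inner r c a a - cmat_inner r c a b - cmat_inner r c b a + cmat_inner r c b b"
    by (simp add: cmat_inner_def cmat_diff_def algebra_simps sum_subtractf sum.distrib)
  moreover have "Re (cmat_inner r c b a) = Re (cmat_inner r c a b)"
    by (subst cmat_inner_commute) simp
  ultimately show ?thesis
    by (simp add: frob_sq_eq_inner)
qed

lemma frob_sq_isometry_mult:
  assumes "isometry_cmat r p u" "is_cmat p c x"
  shows "frob_sq r c (cmat_mult r p c u x) = frob_sq p c x"
proof -
  have "cmat_inner r c (cmat_mult r p c u x) (cmat_mult r p c u x)
      = cmat_inner p c x (cmat_mult p p c (cmat_mult p r p (cmat_adj p r u) u) x)"
    by (simp add: cmat_inner_mult_left cmat_mult_assoc)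
  then show ?thesis
    using assms by (simp add: frob_sq_eq_inner isometry_cmat_def cmat_mult_one_left)
qed

lemma frob_sq_mult_coisometry:
  assumes "cmat_mult p c p v (cmat_adj c p v) = cmat_one p" "is_cmat r p x"
  shows "frob_sq r c (cmat_mult r p c x v) = frob_sq r p x"
proof -
  have "cmat_inner r c (cmat_mult r p c x v) (cmat_mult r p c x v)
      = cmat_inner r p x (cmat_mult r p p x (cmat_mult p c p v (cmat_adj c p v)))"
    by (simp add: cmat_inner_mult_right cmat_mult_assoc)
  then show ?thesis
    using assms by (simp add: frob_sq_eq_inner cmat_mult_one_right)
qed

lemma frob_sq_residual_isometry:
  assumes "isometry_cmat n k u"
  shows "frob_sq n c (cmat_diff a (cmat_mult n n c (cmat_mult n k n u (cmat_adj k n u)) a))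
       = frob_sq n c a - frob_sq k c (cmat_mult k n c (cmat_adj k n u) a)"
proof -
  define b where "b = cmat_mult k n c (cmat_adj k n u) a"
  have proj: "cmat_mult n n c (cmat_mult n k n u (cmat_adj k n u)) a = cmat_mult n k c u b"
    by (simp add: b_def cmat_mult_assoc)
  have "cmat_inner n c (cmat_mult n k c u b) a = cmat_inner k c b b"
    by (simp add: cmat_inner_mult_left b_def)
  then have "Re (cmat_inner n c a (cmat_mult n k c u b)) = frob_sq k c b"
    by (subst cmat_inner_commute) (simp add: frob_sq_eq_inner)
  moreover have "frob_sq n c (cmat_mult n k c u b) = frob_sq k c b"
    using assms by (intro frob_sq_isometry_mult) (auto simp: b_def)
  ultimately show ?thesis
    unfolding proj b_def[symmetric] frob_sq_diff by linarith
qed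

lemma frob_sq_residual_projector:
  assumes "projector_cmat n p"
  shows "frob_sq r n (cmat_diff a (cmat_mult r n n a p)) = frob_sq r n a - frob_sq r n (cmat_mult r n n a p)"
proof -
  have "cmat_inner r n (cmat_mult r n n a p) (cmat_mult r n n a p)
      = cmat_inner r n a (cmat_mult r n n a (cmat_mult n n n p (cmat_adj n n p)))"
    by (simp add: cmat_inner_mult_right cmat_mult_assoc)
  then have "Re (cmat_inner r n a (cmat_mult r n n a p)) = frob_sq r n (cmat_mult r n n a p)"
    using assms by (simp add: frob_sq_eq_inner projector_cmat_def)
  then show ?thesis
    unfolding frob_sq_diff by linarith
qed

lemma frob_sq_mult_projector_le:
  "projector_cmat n p \<Longrightarrow> frob_sq r n (cmat_mult r n n a p) \<le> frob_sq r n a"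
  using frob_sq_residual_projector[of n p r a] frob_sq_nonneg[of r n "cmat_diff a (cmat_mult r n n a p)"]
  by simp

lemma isometry_cmat_mult:
  assumes "isometry_cmat r m q" "isometry_cmat m m u" "is_cmat m m u"
  shows "isometry_cmat r m (cmat_mult r m m q u)"
proof -
  have "cmat_mult m r m (cmat_adj m r (cmat_mult r m m q u)) (cmat_mult r m m q u)
      = cmat_mult m m m (cmat_adj m m u) (cmat_mult m m m (cmat_mult m r m (cmat_adj m r q) q) u)"
    by (simp add: cmat_adj_mult cmat_mult_assoc)
  then show ?thesis
    using assms by (simp add: isometry_cmat_def cmat_mult_one_left)
qed

lemma isometry_cmat_take:
  assumes "isometry_cmat r m u" "k \<le> m"
  shows "isometry_cmat r k (cmat_take k u)"
  unfolding isometry_cmat_def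
proof (rule is_cmat_eqI[of k k])
  fix i j assume "i < k" "j < k"
  then have "cmat_mult k r k (cmat_adj k r (cmat_take k u)) (cmat_take k u) i j
      = cmat_mult m r m (cmat_adj m r u) u i j"
    using assms(2) by (simp add: cmat_mult_def cmat_adj_def cmat_take_def)
  then show "cmat_mult k r k (cmat_adj k r (cmat_take k u)) (cmat_take k u) i j = cmat_one k i j"
    using assms \<open>i < k\<close> \<open>j < k\<close> by (simp add: isometry_cmat_def cmat_one_def)
qed simp_all

lemma isometry_cmat_col_norm:
  assumes "isometry_cmat r c v" "i < c"
  shows "(\<Sum>j<r. (cmod (v j i))\<^sup>2) = 1"
proof -
  have "cmat_mult c r c (cmat_adj c r v) v i i = 1"
    using assms by (simp add: isometry_cmat_def cmat_one_def)
  then have "(\<Sum>j<r. cnj (v j i) * v j i) = 1"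
    using assms(2) by (simp add: cmat_mult_def cmat_adj_def)
  then have "complex_of_real (\<Sum>j<r. (cmod (v j i))\<^sup>2) = 1"
    by (simp only: of_real_sum of_real_cmod_sq)
  then show ?thesis
    using of_real_eq_1_iff by blast
qed

lemma frob_sq_diag_mult:
  assumes "diag_cmat s" "is_cmat m p s"
  shows "frob_sq r c (cmat_mult r p c s y) = (\<Sum>i<r. (cmod (s i i))\<^sup>2 * (\<Sum>j<c. (cmod (y i j))\<^sup>2))"
  using cmat_mult_diag_left[OF assms]
  by (simp add: frob_sq_def sum_distrib_left norm_mult power_mult_distrib)

lemma is_cmat_projector: "projector_cmat n p \<Longrightarrow> is_cmat n n p"
  by (metis is_cmat_adj projector_cmat_def)

lemma projector_cmat_lead_one:
  "projector_cmat n (cmat_lead k (cmat_one n))" "frob_sq n n (cmat_lead k (cmat_one n)) = min k n"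
proof -
  let ?d = "cmat_lead k (cmat_one n)"
  have d: "is_cmat n n ?d"
    by (auto simp: cmat_lead_def cmat_one_def is_cmat_def)
  note diag = cmat_mult_diag_left[OF diag_cmat_lead[OF diag_cmat_one] d]
  have "cmat_mult n n n ?d ?d = ?d"
  proof (rule is_cmat_eqI[OF is_cmat_mult d])
    show "cmat_mult n n n ?d ?d i j = ?d i j" if "i < n" "j < n" for i j
      using diag[OF that] by (simp add: cmat_lead_def cmat_one_def)
  qed
  moreover have "cmat_adj n n ?d = ?d"
    by (auto simp: cmat_lead_def cmat_one_def cmat_adj_def fun_eq_iff)
  ultimately show "projector_cmat n ?d"
    by (simp add: projector_cmat_def)
  have "(\<Sum>j<n. (cmod (?d i j))\<^sup>2) = (if i < k then 1 else 0)" if "i < n" for i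
  proof -
    have "(\<Sum>j<n. (cmod (?d i j))\<^sup>2) = (\<Sum>j<n. if j = i then (if i < k then 1 else 0) else 0)"
      by (rule sum.cong) (auto simp: cmat_lead_def cmat_one_def)
    then show ?thesis
      using that by simp
  qed
  then have "frob_sq n n ?d = (\<Sum>i<n. if i < k then 1 else 0)"
    by (simp add: frob_sq_def)
  also have "\<dots> = (\<Sum>i\<in>{..<n} \<inter> {..<k}. 1)"
    by (subst sum.inter_restrict) simp_all
  also have "{..<n} \<inter> {..<k} = {..<min k n}"
    by auto
  finally show "frob_sq n n (cmat_lead k (cmat_one n)) = min k n"
    by simp
qed

lemma projector_cmat_unitary_conj:
  assumes "unitary_cmat n v" "is_cmat n n v" "projector_cmat n d"
  shows "projector_cmat n (cmat_mult n n n (cmat_mult n n n v d) (cmat_adj n n v))"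
    and "frob_sq n n (cmat_mult n n n (cmat_mult n n n v d) (cmat_adj n n v)) = frob_sq n n d"
proof -
  have vv: "cmat_mult n n n (cmat_adj n n v) v = cmat_one n"
    using assms(1) by (simp add: unitary_cmat_def isometry_cmat_def)
  have vvx: "cmat_mult n n n (cmat_adj n n v) (cmat_mult n n n v x) = x" if "is_cmat n n x" for x
    using that by (simp add: cmat_mult_assoc[symmetric] vv cmat_mult_one_left)
  have ddx: "cmat_mult n n n d (cmat_mult n n n d x) = cmat_mult n n n d x" for x
    using assms(3) by (simp add: cmat_mult_assoc[symmetric] projector_cmat_def)
  show "projector_cmat n (cmat_mult n n n (cmat_mult n n n v d) (cmat_adj n n v))"
    using assms(2,3) is_cmat_projector[OF assms(3)]
    by (simp add: projector_cmat_def cmat_adj_mult cmat_adj_adj cmat_mult_assoc vvx ddx)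
  have "cmat_mult n n n (cmat_adj n n v) (cmat_adj n n (cmat_adj n n v)) = cmat_one n"
    using assms(2) vv by (simp add: cmat_adj_adj)
  then have "frob_sq n n (cmat_mult n n n (cmat_mult n n n v d) (cmat_adj n n v)) = frob_sq n n (cmat_mult n n n v d)"
    by (rule frob_sq_mult_coisometry) simp
  also have "\<dots> = frob_sq n n d"
    using assms is_cmat_projector[OF assms(3)] by (intro frob_sq_isometry_mult) (simp_all add: unitary_cmat_def)
  finally show "frob_sq n n (cmat_mult n n n (cmat_mult n n n v d) (cmat_adj n n v)) = frob_sq n n d" .
qed

lemma cmat_mult_take_lead_diag:
  assumes "is_cmat r r u" "is_cmat r c s" "diag_cmat s"
  shows "cmat_mult r k k (cmat_take k u) (cmat_lead k s) = cmat_take k (cmat_mult r r c u s)"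
proof (rule is_cmat_eqI[of r k])
  show "is_cmat r k (cmat_take k (cmat_mult r r c u s))"
    by (simp add: is_cmat_def cmat_take_def cmat_mult_def)
  fix i j assume ij: "i < r" "j < k"
  have "is_cmat k k (cmat_lead k s)"
    by (simp add: is_cmat_def cmat_lead_def)
  then have "cmat_mult r k k (cmat_take k u) (cmat_lead k s) i j = u i j * s j j"
    using cmat_mult_diag_right[OF diag_cmat_lead[OF assms(3)] _ ij] ij by (simp add: cmat_take_def cmat_lead_def)
  moreover have "cmat_mult r r c u s i j = u i j * s j j"
    using ij assms cmat_mult_diag_right[OF assms(3,2) \<open>i < r\<close>, of j c u]
    by (cases "j < c") (auto simp: cmat_mult_def is_cmat_def)
  ultimately show "cmat_mult r k k (cmat_take k u) (cmat_lead k s) i j = cmat_take k (cmat_mult r r c u s) i j"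
    using ij by (simp add: cmat_take_def)
qed simp

lemma cmat_mult_take_adj_take:
  assumes "is_cmat r c b"
  shows "cmat_mult r k c (cmat_take k b) (cmat_adj k c (cmat_take k v))
       = cmat_mult r c c (cmat_take k b) (cmat_adj c c v)"
proof (rule is_cmat_eqI[OF is_cmat_mult is_cmat_mult])
  fix i j assume ij: "i < r" "j < c"
  have "b i x = 0" if "\<not> x < c" for x
    using assms that by (simp add: is_cmat_def)
  then have "(\<Sum>x<k. b i x * cnj (v j x)) = (\<Sum>x\<in>{..<k} \<inter> {..<c}. b i x * cnj (v j x))"
    by (subst sum.inter_restrict) (auto intro: sum.cong)
  also have "\<dots> = (\<Sum>x<c. (if x < k then b i x else 0) * cnj (v j x))"
    by (subst Int_commute, subst sum.inter_restrict) (auto intro: sum.cong)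
  finally show "cmat_mult r k c (cmat_take k b) (cmat_adj k c (cmat_take k v)) i j
      = cmat_mult r c c (cmat_take k b) (cmat_adj c c v) i j"
    using ij by (simp add: cmat_mult_def cmat_adj_def cmat_take_def)
qed

lemma truncated_svd_eq_mult_projector:
  assumes "svd_cmat r c a u s v"
  shows "cmat_mult r k c (cmat_mult r k k (cmat_take k u) (cmat_lead k s)) (cmat_adj k c (cmat_take k v))
       = cmat_mult r c c a (cmat_mult c c c (cmat_mult c c c v (cmat_lead k (cmat_one c))) (cmat_adj c c v))"
proof -
  define us where "us = cmat_mult r r c u s"
  define d where "d = cmat_lead k (cmat_one c)"
  have d: "is_cmat c c d"
    by (simp add: d_def is_cmat_def cmat_lead_def cmat_one_def)
  have us: "is_cmat r r u" "is_cmat r c s" "diag_cmat s"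
    and vv: "cmat_mult c c c (cmat_adj c c v) v = cmat_one c"
    and a: "a = cmat_mult r c c us (cmat_adj c c v)"
    using assms by (simp_all add: svd_cmat_def unitary_cmat_def isometry_cmat_def us_def)
  have "cmat_mult r k c (cmat_mult r k k (cmat_take k u) (cmat_lead k s)) (cmat_adj k c (cmat_take k v))
      = cmat_mult r c c (cmat_take k us) (cmat_adj c c v)"
    unfolding cmat_mult_take_lead_diag[OF us] us_def by (simp add: cmat_mult_take_adj_take)
  also have "cmat_take k us = cmat_mult r c c us d"
    by (simp add: d_def us_def cmat_mult_lead_one)
  also have "cmat_mult r c c (cmat_mult r c c us d) (cmat_adj c c v)
      = cmat_mult r c c (cmat_mult r c c us (cmat_mult c c c (cmat_mult c c c (cmat_adj c c v) v) d)) (cmat_adj c c v)"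
    by (simp only: vv cmat_mult_one_left[OF d])
  also have "\<dots> = cmat_mult r c c a (cmat_mult c c c (cmat_mult c c c v d) (cmat_adj c c v))"
    by (simp add: a cmat_mult_assoc)
  finally show ?thesis
    by (simp only: d_def)
qed

text \<open>A weighted form of Ky Fan's maximum principle.\<close>

lemma weighted_sum_le_sum_largest:
  fixes s d :: "nat \<Rightarrow> real"
  assumes "decseq s" "\<And>i. 0 \<le> s i" "\<And>i. i < N \<Longrightarrow> 0 \<le> d i \<and> d i \<le> 1"
    and "(\<Sum>i<N. d i) \<le> real k" "k \<le> N"
  shows "(\<Sum>i<N. s i * d i) \<le> (\<Sum>i<k. s i)"
proof -
  have term_le: "(s i - s k) * d i \<le> (if i < k then s i - s k else 0)" if "i < N" for i
  proof (cases "i < k")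
    case True
    then have "s k \<le> s i"
      using assms(1) by (simp add: decseqD)
    then show ?thesis
      using True assms(3)[OF that] by (simp add: mult_left_le)
  next
    case False
    then have "s i \<le> s k"
      using assms(1) by (simp add: decseqD)
    then show ?thesis
      using False assms(3)[OF that] by (simp add: mult_nonpos_nonneg)
  qed
  have "(\<Sum>i<N. s i * d i) = (\<Sum>i<N. (s i - s k) * d i) + s k * (\<Sum>i<N. d i)"
    by (simp add: algebra_simps sum_distrib_left sum.distrib sum_subtractf)
  also have "\<dots> \<le> (\<Sum>i<N. if i < k then s i - s k else 0) + s k * real k"
    using term_le assms(2,4) by (intro add_mono sum_mono mult_left_mono) auto
  also have "(\<Sum>i<N. if i < k then s i - s k else 0) = (\<Sum>i\<in>{..<N} \<inter> {..<k}. s i - s k)"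
    by (subst sum.inter_restrict) simp_all
  also have "{..<N} \<inter> {..<k} = {..<k}"
    using assms(5) by auto
  finally show ?thesis
    by (simp add: sum_subtractf)
qed

lemma decseq_svd_cmat_diag_sq:
  assumes "svd_cmat r c a u s v"
  shows "decseq (\<lambda>i. (cmod (s i i))\<^sup>2)"
proof (rule decseq_SucI)
  fix i
  show "(cmod (s (Suc i) (Suc i)))\<^sup>2 \<le> (cmod (s i i))\<^sup>2"
  proof (cases "Suc i < min r c")
    case True
    then show ?thesis
      using assms by (auto simp: svd_cmat_def cmod_eq_Re intro!: power_mono)
  next
    case False
    then show ?thesis
      using assms by (simp add: svd_cmat_def is_cmat_def)
  qed
qed

lemma row_norm_adj_mult_projector_le:
  assumes "isometry_cmat n n v" "projector_cmat n p"
  shows "(\<Sum>j<n. (cmod (cmat_mult n n n (cmat_adj n n v) p i j))\<^sup>2) \<le> 1"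
proof (cases "i < n")
  case True
  \<comment> \<open>row \<open>i\<close> of \<open>V\<^sup>H\<close> as a \<open>1 \<times> n\<close> matrix\<close>
  define row where "row = (\<lambda>a::nat. \<lambda>j. if a = 0 then cmat_adj n n v i j else 0)"
  have "(\<Sum>j<n. (cmod (cmat_mult n n n (cmat_adj n n v) p i j))\<^sup>2) = frob_sq 1 n (cmat_mult 1 n n row p)"
    using True by (simp add: frob_sq_def cmat_mult_def row_def)
  also have "\<dots> \<le> frob_sq 1 n row"
    using assms(2) by (rule frob_sq_mult_projector_le)
  also have "frob_sq 1 n row = 1"
    using isometry_cmat_col_norm[OF assms(1) True] True by (simp add: frob_sq_def row_def cmat_adj_def)
  finally show ?thesis .
qed (simp add: cmat_mult_def)

lemma frob_sq_svd_mult_projector_le: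
  assumes svd: "svd_cmat m n c u s v" and p: "projector_cmat n p" "frob_sq n n p \<le> real k"
    and "k \<le> m"
  shows "frob_sq m n (cmat_mult m n n c p) \<le> (\<Sum>i<k. (cmod (s i i))\<^sup>2)"
proof -
  define y where "y = cmat_mult n n n (cmat_adj n n v) p"
  define w where "w = (\<lambda>i. \<Sum>j<n. (cmod (y i j))\<^sup>2)"
  have u: "isometry_cmat m m u" and s: "diag_cmat s" "is_cmat m n s" and v: "is_cmat n n v"
    and v_iso: "isometry_cmat n n v" and v_coiso: "cmat_mult n n n v (cmat_adj n n v) = cmat_one n"
    and c: "c = cmat_mult m n n (cmat_mult m m n u s) (cmat_adj n n v)"
    using svd by (simp_all add: svd_cmat_def unitary_cmat_def)
  have w_zero: "w i = 0" if "\<not> i < n" for i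
    using that by (simp add: w_def y_def cmat_mult_def)
  have "(\<Sum>i<m. w i) = (\<Sum>i\<in>{..<m} \<inter> {..<n}. w i)"
    by (subst sum.inter_restrict) (auto simp: w_zero intro: sum.cong)
  also have "\<dots> \<le> (\<Sum>i<n. w i)"
    by (rule sum_mono2) (auto simp: w_def sum_nonneg)
  also have "\<dots> = frob_sq n n y"
    by (simp add: w_def frob_sq_def)
  also have "\<dots> = frob_sq n n p"
    unfolding y_def using v v_coiso is_cmat_projector[OF p(1)]
    by (intro frob_sq_isometry_mult) (simp_all add: isometry_cmat_def cmat_adj_adj)
  finally have w_sum: "(\<Sum>i<m. w i) \<le> real k"
    using p(2) by linarith
  have "frob_sq m n (cmat_mult m n n c p) = frob_sq m n (cmat_mult m m n u (cmat_mult m n n s y))"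
    by (simp add: c y_def cmat_mult_assoc)
  also have "\<dots> = (\<Sum>i<m. (cmod (s i i))\<^sup>2 * w i)"
    using u s by (simp add: frob_sq_isometry_mult frob_sq_diag_mult w_def)
  also have "\<dots> \<le> (\<Sum>i<k. (cmod (s i i))\<^sup>2)"
    using decseq_svd_cmat_diag_sq[OF svd] row_norm_adj_mult_projector_le[OF v_iso p(1)] w_sum \<open>k \<le> m\<close>
    by (intro weighted_sum_le_sum_largest) (simp_all add: w_def y_def sum_nonneg)
  finally show ?thesis .
qed

lemma frob_sq_diag_mult_adj_isometry:
  assumes "diag_cmat s" "is_cmat m n s" "isometry_cmat n n v"
  shows "frob_sq k n (cmat_mult k n n s (cmat_adj n n v)) = (\<Sum>i<k. (cmod (s i i))\<^sup>2)"
proof -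
  have row: "(cmod (s i i))\<^sup>2 * (\<Sum>j<n. (cmod (cmat_adj n n v i j))\<^sup>2) = (cmod (s i i))\<^sup>2" for i
    using isometry_cmat_col_norm[OF assms(3), of i] assms(2)
    by (cases "i < n") (simp_all add: cmat_adj_def is_cmat_def)
  show ?thesis
    by (simp only: frob_sq_diag_mult[OF assms(1,2)] row)
qed

lemma frob_sq_residual_svd_basis:
  assumes q: "isometry_cmat n1 m q"
    and svd: "svd_cmat m n2 (cmat_mult m n1 n2 (cmat_adj m n1 q) a) uc sc vc" and "k \<le> m"
  defines "uk \<equiv> cmat_take k (cmat_mult n1 m m q uc)"
  shows "frob_sq n1 n2 (cmat_diff a (cmat_mult n1 n1 n2 (cmat_mult n1 k n1 uk (cmat_adj k n1 uk)) a))
       = frob_sq n1 n2 a - (\<Sum>i<k. (cmod (sc i i))\<^sup>2)"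
proof -
  define uh where "uh = cmat_mult n1 m m q uc"
  have uc: "is_cmat m m uc" "isometry_cmat m m uc" and sc: "is_cmat m n2 sc" "diag_cmat sc"
    and vc: "isometry_cmat n2 n2 vc"
    and c: "cmat_mult m n1 n2 (cmat_adj m n1 q) a = cmat_mult m n2 n2 (cmat_mult m m n2 uc sc) (cmat_adj n2 n2 vc)"
    using svd by (simp_all add: svd_cmat_def unitary_cmat_def)
  have "isometry_cmat n1 k uk"
    unfolding uk_def using isometry_cmat_mult[OF q uc(2,1)] \<open>k \<le> m\<close> by (rule isometry_cmat_take)
  then have "frob_sq n1 n2 (cmat_diff a (cmat_mult n1 n1 n2 (cmat_mult n1 k n1 uk (cmat_adj k n1 uk)) a))
      = frob_sq n1 n2 a - frob_sq k n2 (cmat_mult k n1 n2 (cmat_adj k n1 uk) a)"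
    by (rule frob_sq_residual_isometry)
  moreover have "cmat_mult m n1 n2 (cmat_adj m n1 uh) a = cmat_mult m n2 n2 sc (cmat_adj n2 n2 vc)"
  proof -
    have "cmat_mult m n1 n2 (cmat_adj m n1 uh) a
        = cmat_mult m m n2 (cmat_adj m m uc) (cmat_mult m n1 n2 (cmat_adj m n1 q) a)"
      by (simp add: uh_def cmat_adj_mult cmat_mult_assoc)
    also have "\<dots> = cmat_mult m n2 n2 (cmat_mult m m n2 (cmat_mult m m m (cmat_adj m m uc) uc) sc)
        (cmat_adj n2 n2 vc)"
      by (simp add: c cmat_mult_assoc)
    finally show ?thesis
      using uc sc by (simp add: isometry_cmat_def cmat_mult_one_left)
  qed
  then have "cmat_mult k n1 n2 (cmat_adj k n1 uk) a = cmat_mult k n2 n2 sc (cmat_adj n2 n2 vc)"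
    using \<open>k \<le> m\<close>
    by (auto simp: fun_eq_iff uk_def uh_def cmat_mult_def cmat_adj_def cmat_take_def split: if_splits)
  ultimately show ?thesis
    by (simp add: frob_sq_diag_mult_adj_isometry[OF sc(2,1) vc])
qed

theorem svd_cmat_projection_error_le:
  assumes svd_a: "svd_cmat n1 n2 a ua sa va" and q: "isometry_cmat n1 m q"
    and svd_c: "svd_cmat m n2 (cmat_mult m n1 n2 (cmat_adj m n1 q) a) uc sc vc" and "k \<le> m"
  defines "uk \<equiv> cmat_take k (cmat_mult n1 m m q uc)"
    and "ak \<equiv> cmat_mult n1 k n2 (cmat_mult n1 k k (cmat_take k ua) (cmat_lead k sa))
                (cmat_adj k n2 (cmat_take k va))"
  shows "frob_sq n1 n2 (cmat_diff a (cmat_mult n1 n1 n2 (cmat_mult n1 k n1 uk (cmat_adj k n1 uk)) a))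
     \<le> frob_sq n1 n2 (cmat_diff ak (cmat_mult n1 n1 n2 (cmat_mult n1 m n1 q (cmat_adj m n1 q)) ak))
       + frob_sq n1 n2 (cmat_diff a ak)"
proof -
  define p where "p = cmat_mult n2 n2 n2 (cmat_mult n2 n2 n2 va (cmat_lead k (cmat_one n2))) (cmat_adj n2 n2 va)"
  have ak: "ak = cmat_mult n1 n2 n2 a p"
    unfolding ak_def p_def using svd_a by (rule truncated_svd_eq_mult_projector)
  have va: "unitary_cmat n2 va" "is_cmat n2 n2 va"
    using svd_a by (simp_all add: svd_cmat_def)
  have p: "projector_cmat n2 p" "frob_sq n2 n2 p \<le> real k"
    using projector_cmat_unitary_conj[OF va projector_cmat_lead_one(1)] projector_cmat_lead_one(2)
    by (simp_all add: p_def)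
  have "cmat_mult m n1 n2 (cmat_adj m n1 q) ak = cmat_mult m n2 n2 (cmat_mult m n1 n2 (cmat_adj m n1 q) a) p"
    by (simp add: ak cmat_mult_assoc)
  then have "frob_sq n1 n2 (cmat_diff ak (cmat_mult n1 n1 n2 (cmat_mult n1 m n1 q (cmat_adj m n1 q)) ak))
      = frob_sq n1 n2 ak - frob_sq m n2 (cmat_mult m n2 n2 (cmat_mult m n1 n2 (cmat_adj m n1 q) a) p)"
    using frob_sq_residual_isometry[OF q, of n2 ak] by simp
  moreover have "frob_sq n1 n2 (cmat_diff a ak) = frob_sq n1 n2 a - frob_sq n1 n2 ak"
    unfolding ak using p(1) by (rule frob_sq_residual_projector)
  moreover have "frob_sq m n2 (cmat_mult m n2 n2 (cmat_mult m n1 n2 (cmat_adj m n1 q) a) p)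
      \<le> (\<Sum>i<k. (cmod (sc i i))\<^sup>2)"
    using svd_c p \<open>k \<le> m\<close> by (rule frob_sq_svd_mult_projector_le)
  ultimately show ?thesis
    using frob_sq_residual_svd_basis[OF q svd_c \<open>k \<le> m\<close>] unfolding uk_def by linarith
qed

section \<open>The DFT along the third mode\<close>

definition dft_root :: "nat \<Rightarrow> complex" where
  "dft_root n = cis (- 2 * pi / real n)"

definition dft_slice :: "nat \<Rightarrow> tensor \<Rightarrow> nat \<Rightarrow> cmat" where
  "dft_slice n X f = (\<lambda>i j. tdft n X i j f)"

lemma dft_root_pow: "dft_root n ^ a = cis (real a * (- 2 * pi / real n))"
  by (simp add: dft_root_def DeMoivre)

lemma tdft_eq_sum_root_pow: "tdft n X i j f = (\<Sum>t<n. complex_of_real (X i j t) * (dft_root n ^ t) ^ f)"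
proof -
  have "(dft_root n ^ t) ^ f = cis (- 2 * pi * real f * real t / real n)" for t
  proof -
    have "(dft_root n ^ t) ^ f = cis (real (t * f) * (- 2 * pi / real n))"
      by (subst power_mult[symmetric]) (rule dft_root_pow)
    also have "real (t * f) * (- 2 * pi / real n) = - 2 * pi * real f * real t / real n"
      by simp
    finally show ?thesis .
  qed
  then show ?thesis
    by (simp add: tdft_def)
qed

lemma norm_dft_root_pow [simp]: "norm (dft_root n ^ a) = 1"
  by (simp add: dft_root_pow)

lemma dft_root_pow_self: "0 < n \<Longrightarrow> dft_root n ^ n = 1"
  by (simp add: dft_root_pow cis_multiple_2pi[of "-1", simplified])

lemma dft_root_pow_mod:
  assumes "0 < n"
  shows "dft_root n ^ a = dft_root n ^ (a mod n)"
  by (metis dft_root_pow_self[OF assms] div_mult_mod_eq power_add power_mult power_one mult_1 mult.commute)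

lemma cnj_dft_root_pow_mult: "cnj (dft_root n ^ a) * dft_root n ^ a = 1"
  by (metis norm_dft_root_pow of_real_1 of_real_cmod_sq power_one)

lemma cnj_dft_root_pow:
  assumes "0 < n" "(a + b) mod n = 0"
  shows "cnj (dft_root n ^ a) = dft_root n ^ b"
proof -
  have "dft_root n ^ a * dft_root n ^ b = 1"
    using dft_root_pow_mod[OF assms(1), of "a + b"] assms(2) by (simp add: power_add)
  then show ?thesis
    by (metis cnj_dft_root_pow_mult mult.assoc mult.commute mult_1_right)
qed

lemma mod_rotate_add_cancel:
  fixes k n t :: nat
  assumes "t \<le> n" "k < n"
  shows "((k + n - t) mod n + t) mod n = k"
proof -
  have "((k + n - t) mod n + t) mod n = (k + n - t + t) mod n"
    by (rule mod_add_left_eq)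
  also have "k + n - t + t = k + n"
    using assms(1) by simp
  finally show ?thesis
    using assms(2) by simp
qed

lemma sum_lessThan_rotate:
  fixes g :: "nat \<Rightarrow> 'a::comm_monoid_add"
  assumes "t < n"
  shows "(\<Sum>k<n. g ((k + n - t) mod n)) = (\<Sum>k<n. g k)"
proof -
  have left_inv: "((k + n - t) mod n + t) mod n = k" if "k < n" for k
    using assms that by (simp add: mod_rotate_add_cancel)
  have right_inv: "((j + t) mod n + n - t) mod n = j" if "j < n" for j
  proof -
    have "((j + t) mod n + n - t) mod n = ((j + t) mod n + (n - t)) mod n"
      using assms by simp
    also have "\<dots> = (j + t + (n - t)) mod n"
      by (rule mod_add_left_eq)
    also have "j + t + (n - t) = j + n"
      using assms by simp
    finally show ?thesis
      using that by simp
  qed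
  show ?thesis
    by (rule sum.reindex_bij_witness[where i = "\<lambda>j. (j + t) mod n" and j = "\<lambda>k. (k + n - t) mod n"])
       (use assms left_inv right_inv in auto)
qed

lemma sum_lessThan_reflect:
  fixes g :: "nat \<Rightarrow> 'a::comm_monoid_add"
  shows "(\<Sum>k<n. g ((n - k) mod n)) = (\<Sum>k<n. g k)"
proof -
  have inv: "(n - (n - k) mod n) mod n = k" if "k < n" for k
    using that by (cases "k = 0") auto
  show ?thesis
    by (rule sum.reindex_bij_witness[where i = "\<lambda>k. (n - k) mod n" and j = "\<lambda>k. (n - k) mod n"])
       (auto simp: inv)
qed

lemma sum_dft_root_orthogonal:
  assumes "0 < n" "t < n" "s < n"
  shows "(\<Sum>f<n. cnj ((dft_root n ^ t) ^ f) * (dft_root n ^ s) ^ f) = (if t = s then of_nat n else 0)"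
proof -
  define z where "z = cnj (dft_root n ^ t) * dft_root n ^ s"
  have z_pow: "cnj ((dft_root n ^ t) ^ f) * (dft_root n ^ s) ^ f = z ^ f" for f
    by (simp add: z_def power_mult_distrib)
  show ?thesis
  proof (cases "t = s")
    case True
    then have "z = 1"
      by (simp only: z_def cnj_dft_root_pow_mult)
    then show ?thesis
      unfolding z_pow using True by simp
  next
    case False
    have cnj_root: "cnj (dft_root n ^ a) = cis (2 * pi * real a / real n)" for a
      by (simp add: dft_root_pow cis_cnj mult_ac)
    have "cis (2 * pi * real t / real n) \<noteq> cis (2 * pi * real s / real n)"
      using bij_betw_roots_unity[OF assms(1)] False assms(2,3) by (auto simp: bij_betw_def inj_on_def)
    then have "cnj (dft_root n ^ t) \<noteq> cnj (dft_root n ^ s)"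
      by (metis cnj_root)
    moreover have "dft_root n ^ t * z = (cnj (dft_root n ^ t) * dft_root n ^ t) * dft_root n ^ s"
      by (simp only: z_def ac_simps)
    then have "dft_root n ^ s = dft_root n ^ t * z"
      by (simp only: cnj_dft_root_pow_mult mult_1_left)
    ultimately have "z \<noteq> 1"
      by auto
    moreover have "z ^ n = cnj ((dft_root n ^ n) ^ t) * (dft_root n ^ n) ^ s"
      by (simp only: z_def power_mult_distrib complex_cnj_power power_mult[symmetric] mult.commute)
    then have "z ^ n = 1"
      by (simp add: dft_root_pow_self assms(1))
    ultimately have "(\<Sum>f<n. z ^ f) = 0"
      by (simp add: geometric_sum)
    then show ?thesis
      unfolding z_pow using False by simp
  qed
qed

lemma sum_dft_circular_shift:
  assumes "0 < n" "t < n"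
  shows "(\<Sum>k<n. complex_of_real (x ((k + n - t) mod n)) * (dft_root n ^ k) ^ f)
       = (\<Sum>k<n. complex_of_real (x k) * (dft_root n ^ k) ^ f) * (dft_root n ^ t) ^ f"
proof -
  have shift: "dft_root n ^ k = dft_root n ^ ((k + n - t) mod n) * dft_root n ^ t" if "k < n" for k
  proof -
    have "dft_root n ^ ((k + n - t) mod n + t) = dft_root n ^ k"
      using dft_root_pow_mod[OF assms(1), of "(k + n - t) mod n + t"] assms(2) that
      by (simp add: mod_rotate_add_cancel)
    then show ?thesis
      by (simp add: power_add)
  qed
  have "(\<Sum>k<n. complex_of_real (x ((k + n - t) mod n)) * (dft_root n ^ k) ^ f)
      = (\<Sum>k<n. complex_of_real (x ((k + n - t) mod n)) * (dft_root n ^ ((k + n - t) mod n)) ^ f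
          * (dft_root n ^ t) ^ f)"
  proof (rule sum.cong[OF refl])
    fix k assume "k \<in> {..<n}"
    then show "complex_of_real (x ((k + n - t) mod n)) * (dft_root n ^ k) ^ f
        = complex_of_real (x ((k + n - t) mod n)) * (dft_root n ^ ((k + n - t) mod n)) ^ f * (dft_root n ^ t) ^ f"
      by (subst shift) (simp_all add: power_mult_distrib)
  qed
  also have "\<dots> = (\<Sum>k<n. complex_of_real (x ((k + n - t) mod n)) * (dft_root n ^ ((k + n - t) mod n)) ^ f)
      * (dft_root n ^ t) ^ f"
    by (rule sum_distrib_right[symmetric])
  also have "(\<Sum>k<n. complex_of_real (x ((k + n - t) mod n)) * (dft_root n ^ ((k + n - t) mod n)) ^ f)
      = (\<Sum>k<n. complex_of_real (x k) * (dft_root n ^ k) ^ f)"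
    by (rule sum_lessThan_rotate[OF assms(2), of "\<lambda>k. complex_of_real (x k) * (dft_root n ^ k) ^ f"])
  finally show ?thesis .
qed

lemma dft_slice_tprod:
  assumes "0 < n"
  shows "dft_slice n (tprod n1 n2 n l X Y) f = cmat_mult n1 n2 l (dft_slice n X f) (dft_slice n Y f)"
proof (intro ext)
  fix i j
  let ?e = "\<lambda>k. (dft_root n ^ k) ^ f"
  show "dft_slice n (tprod n1 n2 n l X Y) f i j = cmat_mult n1 n2 l (dft_slice n X f) (dft_slice n Y f) i j"
  proof (cases "i < n1 \<and> j < l")
    case True
    let ?x = "\<lambda>p t. complex_of_real (X i p t)" and ?y = "\<lambda>p t. complex_of_real (Y p j t)"
    have "dft_slice n (tprod n1 n2 n l X Y) f i j
        = (\<Sum>k<n. (\<Sum>p<n2. \<Sum>t<n. ?x p ((k + n - t) mod n) * ?y p t) * ?e k)"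
      using True by (simp add: dft_slice_def tdft_eq_sum_root_pow tprod_def)
    also have "\<dots> = (\<Sum>k<n. \<Sum>p<n2. \<Sum>t<n. ?y p t * (?x p ((k + n - t) mod n) * ?e k))"
      unfolding sum_distrib_right by (simp add: mult_ac)
    also have "\<dots> = (\<Sum>p<n2. \<Sum>k<n. \<Sum>t<n. ?y p t * (?x p ((k + n - t) mod n) * ?e k))"
      by (rule sum.swap)
    also have "\<dots> = (\<Sum>p<n2. \<Sum>t<n. \<Sum>k<n. ?y p t * (?x p ((k + n - t) mod n) * ?e k))"
      by (rule sum.cong[OF refl], rule sum.swap)
    also have "\<dots> = (\<Sum>p<n2. \<Sum>t<n. ?y p t * (tdft n X i p f * ?e t))"
      by (intro sum.cong refl)
         (simp add: sum_distrib_left[symmetric] sum_dft_circular_shift[OF assms] tdft_eq_sum_root_pow)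
    also have "\<dots> = (\<Sum>p<n2. tdft n X i p f * tdft n Y p j f)"
      by (simp add: tdft_eq_sum_root_pow[of n Y] sum_distrib_left mult_ac)
    finally show ?thesis
      using True by (simp add: cmat_mult_def dft_slice_def)
  qed (auto simp: dft_slice_def cmat_mult_def tdft_def tprod_def)
qed

lemma dft_slice_ttrans:
  assumes "0 < n"
  shows "dft_slice n (ttrans n1 n2 n X) f = cmat_adj n2 n1 (dft_slice n X f)"
proof (intro ext)
  fix i j
  show "dft_slice n (ttrans n1 n2 n X) f i j = cmat_adj n2 n1 (dft_slice n X f) i j"
  proof (cases "i < n2 \<and> j < n1")
    case True
    have reflect: "dft_root n ^ k = cnj (dft_root n ^ ((n - k) mod n))" if "k < n" for k
    proof -
      have "((n - k) mod n + k) mod n = 0"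
        using that by (simp add: mod_add_left_eq)
      then show ?thesis
        using cnj_dft_root_pow[OF assms] by metis
    qed
    have "dft_slice n (ttrans n1 n2 n X) f i j = (\<Sum>k<n. complex_of_real (X j i ((n - k) mod n)) * (dft_root n ^ k) ^ f)"
      using True by (simp add: dft_slice_def tdft_eq_sum_root_pow ttrans_def)
    also have "\<dots> = (\<Sum>k<n. complex_of_real (X j i ((n - k) mod n)) * cnj ((dft_root n ^ ((n - k) mod n)) ^ f))"
    proof (rule sum.cong[OF refl])
      fix k assume "k \<in> {..<n}"
      then show "complex_of_real (X j i ((n - k) mod n)) * (dft_root n ^ k) ^ f
          = complex_of_real (X j i ((n - k) mod n)) * cnj ((dft_root n ^ ((n - k) mod n)) ^ f)"
        using reflect[of k] by simp
    qed
    also have "\<dots> = (\<Sum>k<n. complex_of_real (X j i k) * cnj ((dft_root n ^ k) ^ f))"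
      by (rule sum_lessThan_reflect)
    finally show ?thesis
      using True by (simp add: cmat_adj_def dft_slice_def tdft_eq_sum_root_pow)
  qed (auto simp: dft_slice_def cmat_adj_def tdft_def ttrans_def)
qed

lemma dft_slice_tid:
  assumes "0 < n"
  shows "dft_slice n (tid m n) f = cmat_one m"
proof (intro ext)
  fix i j
  have "dft_slice n (tid m n) f i j = (\<Sum>t<n. if t = 0 then complex_of_real (tid m n i j 0) else 0)"
    unfolding dft_slice_def tdft_eq_sum_root_pow by (rule sum.cong) (auto simp: tid_def)
  then show "dft_slice n (tid m n) f i j = cmat_one m i j"
    using assms by (simp add: tid_def cmat_one_def)
qed

lemma dft_slice_tminus: "dft_slice n (tminus X Y) f = cmat_diff (dft_slice n X f) (dft_slice n Y f)"
  by (simp add: dft_slice_def tminus_def cmat_diff_def tdft_def fun_eq_iff sum_subtractf algebra_simps)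

lemma dft_slice_tlat_take: "dft_slice n (tlat_take k X) f = cmat_take k (dft_slice n X f)"
  by (simp add: dft_slice_def tlat_take_def cmat_take_def tdft_def fun_eq_iff)

lemma dft_slice_tlead: "dft_slice n (tlead k X) f = cmat_lead k (dft_slice n X f)"
  by (auto simp: dft_slice_def tlead_def cmat_lead_def tdft_def fun_eq_iff)

lemma is_cmat_dft_slice: "is_tensor n1 n2 n X \<Longrightarrow> is_cmat n1 n2 (dft_slice n X f)"
  by (auto simp: is_tensor_def is_cmat_def dft_slice_def tdft_def)

lemma diag_cmat_dft_slice: "f_diagonal S \<Longrightarrow> diag_cmat (dft_slice n S f)"
  by (simp add: f_diagonal_def diag_cmat_def dft_slice_def tdft_def)

lemma sum_cmod_sq_dft:
  assumes "0 < n"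
  shows "(\<Sum>f<n. (cmod (\<Sum>t<n. complex_of_real (x t) * (dft_root n ^ t) ^ f))\<^sup>2) = real n * (\<Sum>t<n. (x t)\<^sup>2)"
proof -
  let ?e = "\<lambda>t f. (dft_root n ^ t) ^ f"
  have "complex_of_real (\<Sum>f<n. (cmod (\<Sum>t<n. complex_of_real (x t) * ?e t f))\<^sup>2)
      = (\<Sum>f<n. \<Sum>t<n. \<Sum>s<n. complex_of_real (x t * x s) * (cnj (?e t f) * ?e s f))"
    by (simp only: of_real_sum of_real_cmod_sq) (simp add: sum_distrib_left sum_distrib_right mult_ac)
  also have "\<dots> = (\<Sum>t<n. \<Sum>s<n. \<Sum>f<n. complex_of_real (x t * x s) * (cnj (?e t f) * ?e s f))"
    by (subst sum.swap, rule sum.cong[OF refl], rule sum.swap)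
  also have "\<dots> = (\<Sum>t<n. \<Sum>s<n. complex_of_real (x t * x s) * (\<Sum>f<n. cnj (?e t f) * ?e s f))"
    by (simp only: sum_distrib_left)
  also have "\<dots> = (\<Sum>t<n. \<Sum>s<n. complex_of_real (x t * x s) * (if t = s then of_nat n else 0))"
    using assms by (intro sum.cong refl) (simp only: sum_dft_root_orthogonal lessThan_iff)
  also have "\<dots> = (\<Sum>t<n. complex_of_real (x t * x t) * of_nat n)"
    by (intro sum.cong refl) (simp add: if_distrib sum.delta' cong: if_cong)
  also have "\<dots> = complex_of_real (real n * (\<Sum>t<n. (x t)\<^sup>2))"
    by (simp add: of_real_sum sum_distrib_left power2_eq_square mult_ac)
  finally show ?thesis
    by (simp only: of_real_eq_iff)
qed

lemma tfro_sq_eq_sum_frob_sq_dft_slice: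
  assumes "0 < n"
  shows "(tfro n1 n2 n X)\<^sup>2 = (\<Sum>f<n. frob_sq n1 n2 (dft_slice n X f)) / real n"
proof -
  have "(\<Sum>f<n. frob_sq n1 n2 (dft_slice n X f)) = (\<Sum>i<n1. \<Sum>j<n2. \<Sum>f<n. (cmod (tdft n X i j f))\<^sup>2)"
    by (simp add: frob_sq_def dft_slice_def sum.swap[of _ "{..<n}"])
  also have "\<dots> = real n * (\<Sum>i<n1. \<Sum>j<n2. \<Sum>k<n. (X i j k)\<^sup>2)"
    using assms by (simp add: tdft_eq_sum_root_pow sum_cmod_sq_dft sum_distrib_left)
  finally show ?thesis
    using assms by (simp add: tfro_def sum_nonneg)
qed

lemma tfro_sq_le_of_dft_slices:
  assumes "0 < n"
    and "\<And>f. f < n \<Longrightarrow> frob_sq n1 n2 (dft_slice n X f)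
                         \<le> frob_sq n1 n2 (dft_slice n Y f) + frob_sq n1 n2 (dft_slice n Z f)"
  shows "(tfro n1 n2 n X)\<^sup>2 \<le> (tfro n1 n2 n Y)\<^sup>2 + (tfro n1 n2 n Z)\<^sup>2"
proof -
  have "(\<Sum>f<n. frob_sq n1 n2 (dft_slice n X f))
      \<le> (\<Sum>f<n. frob_sq n1 n2 (dft_slice n Y f)) + (\<Sum>f<n. frob_sq n1 n2 (dft_slice n Z f))"
    unfolding sum.distrib[symmetric] using assms(2) by (rule sum_mono) simp
  then show ?thesis
    using assms(1) by (simp add: tfro_sq_eq_sum_frob_sq_dft_slice add_divide_distrib[symmetric] divide_right_mono)
qed

lemma cmat_mult_dft_slice_eq_one:
  assumes "0 < n" "tprod a b n a X Y = tid a n"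
  shows "cmat_mult a b a (dft_slice n X f) (dft_slice n Y f) = cmat_one a"
  using arg_cong[OF assms(2), of "\<lambda>T. dft_slice n T f"] by (simp add: dft_slice_tprod dft_slice_tid assms(1))

lemma unitary_cmat_dft_slice:
  "0 < n \<Longrightarrow> orthogonal_tensor a n U \<Longrightarrow> unitary_cmat a (dft_slice n U f)"
  by (simp add: orthogonal_tensor_def unitary_cmat_def isometry_cmat_def cmat_mult_dft_slice_eq_one
      flip: dft_slice_ttrans)

lemma isometry_cmat_dft_slice_tqr:
  "0 < n \<Longrightarrow> is_tqr_factor n1 l n m K Q \<Longrightarrow> isometry_cmat n1 m (dft_slice n Q f)"
  by (simp add: is_tqr_factor_def isometry_cmat_def cmat_mult_dft_slice_eq_one flip: dft_slice_ttrans)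

lemma svd_cmat_dft_slice:
  assumes "0 < n" "f < n" "is_tsvd n1 n2 n X U S V"
  shows "svd_cmat n1 n2 (dft_slice n X f) (dft_slice n U f) (dft_slice n S f) (dft_slice n V f)"
proof -
  have "X = tprod n1 n2 n n2 (tprod n1 n1 n n2 U S) (ttrans n2 n2 n V)"
    using assms(3) by (simp add: is_tsvd_def)
  then have "dft_slice n X f = cmat_mult n1 n2 n2 (cmat_mult n1 n1 n2 (dft_slice n U f) (dft_slice n S f))
      (cmat_adj n2 n2 (dft_slice n V f))"
    using assms(1) by (simp add: dft_slice_tprod dft_slice_ttrans)
  then show ?thesis
    using assms
    by (simp add: svd_cmat_def is_tsvd_def is_cmat_dft_slice unitary_cmat_dft_slice diag_cmat_dft_slice)
       (simp add: dft_slice_def)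
qed

theorem theorem3:
  fixes n1 n2 n3 s m q k :: nat and A B Q UA SA VA UC SC VC :: tensor
  assumes hA: "is_tensor n1 n2 n3 A"
    and hB: "is_tensor n2 s n3 B"
    and hQ: "is_tqr_factor n1 (Suc q * s) n3 m (krylov n1 n2 n3 s q A B) Q"
    and hsvdA: "is_tsvd n1 n2 n3 A UA SA VA"
    and hsvdC: "is_tsvd m n2 n3 (tprod m n1 n3 n2 (ttrans n1 m n3 Q) A) UC SC VC"
    and hk: "k \<le> m"
  shows "(let Uh = tprod n1 m n3 m Q UC;
              Uk = tlat_take k Uh;
              Ak = ttrunc n1 n2 n3 k UA SA VA
          in (tfro n1 n2 n3
                (tminus A (tprod n1 n1 n3 n2 (tprod n1 k n3 n1 Uk (ttrans n1 k n3 Uk)) A)))\<^sup>2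
             \<le> (tfro n1 n2 n3
                  (tminus Ak (tprod n1 n1 n3 n2 (tprod n1 m n3 n1 Q (ttrans n1 m n3 Q)) Ak)))\<^sup>2
               + (tfro n1 n2 n3 (tminus A Ak))\<^sup>2)"
proof (cases "n3 = 0")
  case True
  then show ?thesis
    by (simp add: Let_def tfro_def)
next
  case False
  then have n3: "0 < n3"
    by simp
  note dft_slice_simps = dft_slice_tprod[OF n3] dft_slice_ttrans[OF n3] dft_slice_tminus
    dft_slice_tlat_take dft_slice_tlead
  show ?thesis
    unfolding Let_def
  proof (rule tfro_sq_le_of_dft_slices[OF n3], goal_cases)
    case (1 f)
    have "svd_cmat m n2 (cmat_mult m n1 n2 (cmat_adj m n1 (dft_slice n3 Q f)) (dft_slice n3 A f))
        (dft_slice n3 UC f) (dft_slice n3 SC f) (dft_slice n3 VC f)"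
      using svd_cmat_dft_slice[OF n3 1 hsvdC] by (simp add: dft_slice_simps)
    from svd_cmat_projection_error_le[OF svd_cmat_dft_slice[OF n3 1 hsvdA]
        isometry_cmat_dft_slice_tqr[OF n3 hQ] this hk]
    show ?case
      by (simp add: ttrunc_def dft_slice_simps)
  qed
qed

end
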